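(* Let $X$ and $F$ be Banach spaces, $N\in\mathbb{N}$, $\lambda\ge1$, and suppose $I\colon X\to\ell_\infty^N$ is a $\lambda$-embedding. Then every bounded operator $T\colon X\to F$ satisfies \[ \pi_2(T)\le e^2\,\lambda\,C_2(F)\,\sqrt{1+\log N}\,\|T\|. \]
   Context: An operator $I\colon X\to Y$ is a $\lambda$-embedding if it is injective with closed range and $\|I\|\,\|I^{-1}\colon I(X)\to X\|\le\lambda$. $\ell_\infty^N$ is $\mathbb{C}^N$ with the max norm. $C_2(F)$ is the cotype-2 constant of $F$: the least $C$ with $(\sum_k\|x_k\|^2)^{1/2}\le C(\int_0^1\|\sum_k r_k(t)x_k\|^2dt)^{1/2}$ for all finite families in $F$, where $r_k$ are the Rademacher functions ($C_2(F)=\infty$ if no such constant exists). $\pi_2$ denotes the absolutely 2-summing norm. $\log$ is the natural logarithm. *)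

theory Defs
  imports "HOL-Analysis.Analysis"
begin

text \<open>Complex Banach spaces: a real Banach space with a compatible complex scalar
  multiplication (HOL-Analysis has no complex vector space class).\<close>
class cbanach = banach +
  fixes cscale :: "complex \<Rightarrow> 'a \<Rightarrow> 'a"
  assumes cscale_of_real: "cscale (complex_of_real r) x = r *\<^sub>R x"
    and cscale_add_right: "cscale a (x + y) = cscale a x + cscale a y"
    and cscale_add_left: "cscale (a + b) x = cscale a x + cscale b x"
    and cscale_cscale: "cscale a (cscale b x) = cscale (a * b) x"
    and norm_cscale: "norm (cscale a x) = cmod a * norm x"

definition bounded_clin_op :: "('a::cbanach \<Rightarrow> 'b::cbanach) \<Rightarrow> bool" where
  "bounded_clin_op T \<longleftrightarrow>
     (\<forall>x y. T (x + y) = T x + T y) \<and> (\<forall>c x. T (cscale c x) = cscale c (T x)) \<and>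
     (\<exists>K. \<forall>x. norm (T x) \<le> K * norm x)"

definition bounded_clin_fun :: "('a::cbanach \<Rightarrow> complex) \<Rightarrow> bool" where
  "bounded_clin_fun \<phi> \<longleftrightarrow>
     (\<forall>x y. \<phi> (x + y) = \<phi> x + \<phi> y) \<and> (\<forall>c x. \<phi> (cscale c x) = c * \<phi> x) \<and>
     (\<exists>K. \<forall>x. cmod (\<phi> x) \<le> K * norm x)"

definition dual_ball :: "('a::cbanach \<Rightarrow> complex) set" where
  "dual_ball = {\<phi>. bounded_clin_fun \<phi> \<and> onorm \<phi> \<le> 1}"

definition weak_l2 :: "nat \<Rightarrow> (nat \<Rightarrow> 'a::cbanach) \<Rightarrow> real" where
  "weak_l2 n x = (SUP \<phi>\<in>dual_ball. sqrt (\<Sum>k<n. (cmod (\<phi> (x k)))\<^sup>2))"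

text \<open>Absolutely 2-summing norm (infinity if T is not 2-summing).\<close>
definition pi2 :: "('a::cbanach \<Rightarrow> 'b::cbanach) \<Rightarrow> ereal" where
  "pi2 T = Inf {C. 0 \<le> C \<and> (\<forall>n (x::nat \<Rightarrow> 'a).
       ereal (sqrt (\<Sum>k<n. (norm (T (x k)))\<^sup>2)) \<le> C * ereal (weak_l2 n x))}"

text \<open>Rademacher functions r_k(t) = sign(sin(2^k pi t)), k \<ge> 1 (equal a.e. on [0,1]).\<close>
definition rademacher :: "nat \<Rightarrow> real \<Rightarrow> real" where
  "rademacher k t = (if even \<lfloor>2 ^ k * t\<rfloor> then 1 else -1)"

text \<open>Cotype-2 constant of the space 'b (infinity if there is no such constant).\<close>
definition cotype2_const :: "'b::cbanach itself \<Rightarrow> ereal" where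
  "cotype2_const _ = Inf {C. 0 \<le> C \<and> (\<forall>n (x::nat \<Rightarrow> 'b).
       ereal (sqrt (\<Sum>k<n. (norm (x k))\<^sup>2)) \<le>
       C * ereal (sqrt (integral {0..1} (\<lambda>t. (norm (\<Sum>k<n. rademacher (Suc k) t *\<^sub>R x k))\<^sup>2))))}"

text \<open>Max norm of l_infinity^N; vectors are functions nat \<Rightarrow> complex supported on {..<N}.\<close>
definition linf_norm :: "nat \<Rightarrow> (nat \<Rightarrow> complex) \<Rightarrow> real" where
  "linf_norm N v = Max (insert 0 ((\<lambda>i. cmod (v i)) ` {..<N}))"

text \<open>lambda-embedding of X into l_infinity^N: injective bounded complex-linear map
  with \<parallel>I\<parallel> * \<parallel>I^{-1}\<parallel> \<le> lambda (range closedness is automatic in finite dimension,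
  the boundedness of the inverse is required explicitly).\<close>
definition lambda_embedding :: "nat \<Rightarrow> real \<Rightarrow> ('a::cbanach \<Rightarrow> nat \<Rightarrow> complex) \<Rightarrow> bool" where
  "lambda_embedding N lam I \<longleftrightarrow>
     (\<forall>x y. I (x + y) = (\<lambda>i. I x i + I y i)) \<and> (\<forall>c x. I (cscale c x) = (\<lambda>i. c * I x i)) \<and>
     (\<forall>x i. N \<le> i \<longrightarrow> I x i = 0) \<and> inj I \<and>
     bdd_above (range (\<lambda>x. linf_norm N (I x) / norm x)) \<and>
     bdd_above (range (\<lambda>x. norm x / linf_norm N (I x))) \<and>
     (SUP x. linf_norm N (I x) / norm x) * (SUP x. norm x / linf_norm N (I x)) \<le> lam"

end

theory Submission
  imports Defs
begin

text \<open>Let \<open>x\<^sub>1, \<dots>, x\<^sub>n \<in> X\<close> have weak \<open>\<ell>\<^sub>2\<close> norm \<open>w\<close>. Cotype 2 of \<open>F\<close> bounds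
  \<open>(\<Sum>\<^sub>k \<parallel>T x\<^sub>k\<parallel>\<^sup>2)\<^sup>1\<^sup>/\<^sup>2\<close> by \<open>C\<^sub>2(F)\<close> times the root mean square over random signs of
  \<open>\<parallel>T(\<Sum>\<^sub>k \<epsilon>\<^sub>k x\<^sub>k)\<parallel> \<le> \<parallel>T\<parallel> \<parallel>I\<^sup>-\<^sup>1\<parallel> \<parallel>I(\<Sum>\<^sub>k \<epsilon>\<^sub>k x\<^sub>k)\<parallel>\<^sub>\<infinity>\<close>. Each coordinate of
  \<open>I(\<Sum>\<^sub>k \<epsilon>\<^sub>k x\<^sub>k)\<close> is a Rademacher sum whose coefficients have \<open>\<ell>\<^sub>2\<close> norm at most
  \<open>\<parallel>I\<parallel> w\<close>, since the coordinate functionals of \<open>I\<close> have norm at most \<open>\<parallel>I\<parallel>\<close>. The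
  subgaussian maximal inequality bounds the mean square of the largest of \<open>N\<close> such sums
  by \<open>18 (1 + log N) \<parallel>I\<parallel>\<^sup>2 w\<^sup>2\<close>, and \<open>\<surd>18 \<le> e\<^sup>2\<close>. Averages over signs are integrals over
  \<open>[0,1]\<close> because the Rademacher functions are constant on dyadic intervals.\<close>

section \<open>Dyadic signs and Rademacher functions\<close>

text \<open>\<open>dyadic_sign n j k\<close> is the sign encoding the \<open>(k+1)\<close>-st binary digit of \<open>j < 2\<^sup>n\<close>, i.e. the
  value of \<open>r\<^sub>k\<^sub>+\<^sub>1\<close> on the \<open>j\<close>-th dyadic interval of length \<open>2\<^sup>-\<^sup>n\<close>; averaging over
  \<open>j < 2\<^sup>n\<close> is averaging over all sign patterns \<open>\<epsilon> \<in> {\<plusminus>1}\<^sup>n\<close>.\<close>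

definition dyadic_sign :: "nat \<Rightarrow> nat \<Rightarrow> nat \<Rightarrow> real" where
  "dyadic_sign n j k = (if even (j div 2 ^ (n - Suc k)) then 1 else -1)"

definition dyadic_avg :: "nat \<Rightarrow> (nat \<Rightarrow> real) \<Rightarrow> real" where
  "dyadic_avg n h = (\<Sum>j<2 ^ n. h j) / 2 ^ n"

lemma sum_lessThan_double:
  "(\<Sum>j<2 * m. f j) = (\<Sum>j<m. f (2 * j) + f (2 * j + 1 :: nat))"
  by (induction m) (auto simp: ac_simps)

lemma dyadic_sign_Suc:
  assumes "k < n"
  shows "dyadic_sign (Suc n) j k = dyadic_sign n (j div 2) k"
proof -
  have "Suc n - Suc k = Suc (n - Suc k)"
    using assms by (simp add: Suc_diff_Suc)
  then show ?thesis
    unfolding dyadic_sign_def by (simp add: div_mult2_eq)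
qed

lemma dyadic_sign_Suc_last: "dyadic_sign (Suc n) j n = (if even j then 1 else -1)"
  unfolding dyadic_sign_def by simp

lemma dyadic_avg_exp_sign_sum:
  "dyadic_avg n (\<lambda>j. exp (\<Sum>k<n. dyadic_sign n j k * c k)) = (\<Prod>k<n. cosh (c k))"
proof (induction n)
  case 0
  then show ?case by (simp add: dyadic_avg_def)
next
  case (Suc n)
  let ?E = "\<lambda>j. exp (\<Sum>k<n. dyadic_sign n j k * c k)"
  have "(\<Sum>j<2 ^ Suc n. exp (\<Sum>k<Suc n. dyadic_sign (Suc n) j k * c k))
      = (\<Sum>j<2 ^ n. ?E j * exp (c n) + ?E j * exp (- c n))"
    unfolding power_Suc sum_lessThan_double
  proof (intro sum.cong refl)
    fix j
    have "(\<Sum>k<n. dyadic_sign (Suc n) (2 * j + b) k * c k) = (\<Sum>k<n. dyadic_sign n j k * c k)"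
      if "b < 2" for b
      using that by (intro sum.cong refl) (simp add: dyadic_sign_Suc)
    from this[of 0] this[of 1] show "exp (\<Sum>k<Suc n. dyadic_sign (Suc n) (2 * j) k * c k)
        + exp (\<Sum>k<Suc n. dyadic_sign (Suc n) (2 * j + 1) k * c k) = ?E j * exp (c n) + ?E j * exp (- c n)"
      by (simp add: dyadic_sign_Suc_last exp_add exp_diff exp_minus field_simps)
  qed
  also have "\<dots> = (\<Sum>j<2 ^ n. 2 * cosh (c n) * ?E j)"
    by (intro sum.cong) (simp_all add: cosh_def field_simps)
  also have "\<dots> = 2 * cosh (c n) * (\<Sum>j<2 ^ n. ?E j)"
    by (rule sum_distrib_left[symmetric])
  finally show ?case
    using Suc.IH by (simp add: dyadic_avg_def field_simps)
qed

lemma dyadic_avg_sum: "dyadic_avg n (\<lambda>j. \<Sum>i\<in>A. f i j) = (\<Sum>i\<in>A. dyadic_avg n (f i))"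
  unfolding dyadic_avg_def sum_divide_distrib by (rule sum.swap)

lemma dyadic_avg_add: "dyadic_avg n (\<lambda>j. f j + g j) = dyadic_avg n f + dyadic_avg n g"
  unfolding dyadic_avg_def by (simp add: sum.distrib add_divide_distrib)

lemma dyadic_avg_const [simp]: "dyadic_avg n (\<lambda>j. c) = c"
  unfolding dyadic_avg_def by simp

lemma dyadic_avg_mult_left: "dyadic_avg n (\<lambda>j. c * f j) = c * dyadic_avg n f"
  unfolding dyadic_avg_def by (simp add: sum_distrib_left)

lemma dyadic_avg_divide: "dyadic_avg n (\<lambda>j. f j / c) = dyadic_avg n f / c"
  unfolding dyadic_avg_def by (simp add: sum_divide_distrib mult.commute)

lemma dyadic_avg_mono: "(\<And>j. j < 2 ^ n \<Longrightarrow> f j \<le> g j) \<Longrightarrow> dyadic_avg n f \<le> dyadic_avg n g"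
  unfolding dyadic_avg_def by (intro divide_right_mono sum_mono) auto

lemma rademacher_eq_dyadic_sign:
  assumes "\<lfloor>2 ^ n * t\<rfloor> = int j" "k < n"
  shows "rademacher (Suc k) t = dyadic_sign n j k"
proof -
  have "n = Suc k + (n - Suc k)"
    using assms(2) by simp
  then have "(2::real) ^ n = 2 ^ Suc k * 2 ^ (n - Suc k)"
    by (metis power_add)
  then have "2 ^ Suc k * t = 2 ^ n * t / real_of_int (int (2 ^ (n - Suc k)))"
    by simp
  moreover have "\<lfloor>2 ^ n * t / real_of_int (int (2 ^ (n - Suc k)))\<rfloor>
      = \<lfloor>2 ^ n * t\<rfloor> div int (2 ^ (n - Suc k))"
    by (rule floor_divide_real_eq_div) simp
  ultimately have "\<lfloor>2 ^ Suc k * t\<rfloor> = int (j div 2 ^ (n - Suc k))"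
    using assms(1) by (simp add: zdiv_int)
  then show ?thesis
    unfolding rademacher_def dyadic_sign_def by (simp add: even_of_nat_iff)
qed

lemma has_integral_dyadic_step:
  fixes f :: "real \<Rightarrow> real"
  assumes "\<And>j t. j < 2 ^ n \<Longrightarrow> \<lfloor>2 ^ n * t\<rfloor> = int j \<Longrightarrow> f t = h j"
  shows "(f has_integral dyadic_avg n h) {0..1}"
proof -
  have "(f has_integral (\<Sum>j<m. h j) / 2 ^ n) {0..real m / 2 ^ n}" if "m \<le> 2 ^ n" for m
    using that
  proof (induction m)
    case 0
    then show ?case by (simp add: has_integral_refl)
  next
    case (Suc m)
    have on_step: "f t = h m" if "t \<in> {real m / 2 ^ n..real (Suc m) / 2 ^ n} - {real (Suc m) / 2 ^ n}" for t
    proof (rule assms)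
      show "\<lfloor>2 ^ n * t\<rfloor> = int m"
        using that by (intro floor_unique) (auto simp: field_simps)
    qed (use Suc.prems in simp)
    have const: "((\<lambda>_. h m) has_integral h m / 2 ^ n) {real m / 2 ^ n..real (Suc m) / 2 ^ n}"
      using has_integral_const_real[of "h m" "real m / 2 ^ n" "real (Suc m) / 2 ^ n"]
      by (simp add: field_simps)
    have "(f has_integral h m / 2 ^ n) {real m / 2 ^ n..real (Suc m) / 2 ^ n}"
      by (rule has_integral_spike_finite[OF finite.insertI[OF finite.emptyI] on_step const])
    then have "(f has_integral (\<Sum>j<m. h j) / 2 ^ n + h m / 2 ^ n) {0..real (Suc m) / 2 ^ n}"
      using Suc by (intro has_integral_combine[of 0 "real m / 2 ^ n"]) (simp_all add: divide_right_mono)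
    then show ?case
      by (simp add: add_divide_distrib)
  qed
  from this[of "2 ^ n"] show ?thesis by (simp add: dyadic_avg_def)
qed

lemma has_integral_rademacher_sum:
  fixes y :: "nat \<Rightarrow> 'a::real_vector" and f :: "'a \<Rightarrow> real"
  shows "((\<lambda>t. f (\<Sum>k<n. rademacher (Suc k) t *\<^sub>R y k)) has_integral
           dyadic_avg n (\<lambda>j. f (\<Sum>k<n. dyadic_sign n j k *\<^sub>R y k))) {0..1}"
proof (rule has_integral_dyadic_step)
  fix j and t :: real
  assume "\<lfloor>2 ^ n * t\<rfloor> = int j"
  then have "(\<Sum>k<n. rademacher (Suc k) t *\<^sub>R y k) = (\<Sum>k<n. dyadic_sign n j k *\<^sub>R y k)"
    by (intro sum.cong refl) (simp add: rademacher_eq_dyadic_sign)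
  then show "f (\<Sum>k<n. rademacher (Suc k) t *\<^sub>R y k) = f (\<Sum>k<n. dyadic_sign n j k *\<^sub>R y k)"
    by simp
qed

section \<open>The subgaussian maximal inequality\<close>

lemma cosh_le_exp_square: "cosh x \<le> exp (x\<^sup>2)" for x :: real
proof -
  have "cosh x \<le> exp (x\<^sup>2)" if "0 \<le> x" for x :: real
  proof (cases "x \<le> 1")
    case True
    have "exp (- x) \<le> 1 / (1 + x)"
      using exp_ge_add_one_self[of x] that by (simp add: exp_minus field_simps)
    also have "\<dots> \<le> 1 - x + x\<^sup>2"
      using that by (simp add: field_simps power2_eq_square mult_nonneg_nonneg)
    finally have "cosh x \<le> 1 + x\<^sup>2"
      using exp_bound[OF that True] by (simp add: cosh_def)
    also have "\<dots> \<le> exp (x\<^sup>2)"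
      using exp_ge_add_one_self[of "x\<^sup>2"] by simp
    finally show ?thesis .
  next
    case False
    have "cosh x \<le> exp x"
      using that by (simp add: cosh_def)
    also have "\<dots> \<le> exp (x\<^sup>2)"
      using False by (simp add: power2_eq_square)
    finally show ?thesis .
  qed
  from this[of "\<bar>x\<bar>"] show ?thesis
    by (cases "0 \<le> x") simp_all
qed

lemma dyadic_avg_exp_sign_sum_le:
  assumes "(\<Sum>k<n. (a k)\<^sup>2) \<le> s2"
  shows "dyadic_avg n (\<lambda>j. exp (s * (\<Sum>k<n. dyadic_sign n j k * a k))) \<le> exp (s\<^sup>2 * s2)"
proof -
  have "dyadic_avg n (\<lambda>j. exp (s * (\<Sum>k<n. dyadic_sign n j k * a k))) = (\<Prod>k<n. cosh (s * a k))"
    using dyadic_avg_exp_sign_sum[of n "\<lambda>k. s * a k"] by (simp add: sum_distrib_left ac_simps)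
  also have "\<dots> \<le> (\<Prod>k<n. exp ((s * a k)\<^sup>2))"
    by (intro prod_mono) (auto intro: cosh_le_exp_square order_trans[OF zero_le_one cosh_real_ge_1])
  also have "\<dots> = exp (s\<^sup>2 * (\<Sum>k<n. (a k)\<^sup>2))"
    by (simp add: exp_sum sum_distrib_left power_mult_distrib)
  also have "\<dots> \<le> exp (s\<^sup>2 * s2)"
    using assms by (simp add: mult_left_mono)
  finally show ?thesis .
qed

lemma convex_on_neg_ln_square: "convex_on {exp 1..} (\<lambda>y. - (ln y)\<^sup>2)"
proof (rule convex_on_realI[where f' = "\<lambda>y. - 2 * ln y / y"])
  fix x :: real
  assume "x \<in> {exp 1..}"
  then have "0 < x"
    by (meson atLeast_iff exp_gt_zero less_le_trans)
  then show "((\<lambda>y. - (ln y)\<^sup>2) has_real_derivative - 2 * ln x / x) (at x)"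
    by (auto intro!: derivative_eq_intros simp: field_simps power2_eq_square)
next
  fix x y :: real
  assume "x \<in> {exp 1..}" "y \<in> {exp 1..}" "x \<le> y"
  then have "ln y / y \<le> ln x / x"
    by (intro ln_x_over_x_mono) auto
  then show "- 2 * ln x / x \<le> - 2 * ln y / y"
    by simp
qed simp

lemma dyadic_avg_ln_square_le:
  assumes "\<And>j. j < 2 ^ n \<Longrightarrow> exp 1 \<le> W j"
  shows "dyadic_avg n (\<lambda>j. (ln (W j))\<^sup>2) \<le> (ln (dyadic_avg n W))\<^sup>2"
proof -
  have "- (ln (\<Sum>j<2 ^ n. (1 / 2 ^ n) *\<^sub>R W j))\<^sup>2 \<le> (\<Sum>j<2 ^ n. (1 / 2 ^ n) * - (ln (W j))\<^sup>2)"
    using convex_on_sum[OF _ _ convex_on_neg_ln_square, of "{..<2 ^ n}" "\<lambda>_. 1 / 2 ^ n" W] assms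
    by (simp add: lessThan_empty_iff)
  then show ?thesis
    by (simp add: dyadic_avg_def sum_divide_distrib sum_negf)
qed

lemma square_le_ln_sum_exp_square:
  fixes X :: "'i \<Rightarrow> real"
  assumes "0 < s" "finite A" "i \<in> A"
  shows "(X i)\<^sup>2 \<le> (ln (exp 1 + (\<Sum>i\<in>A. exp (s * X i) + exp (- (s * X i)))))\<^sup>2 / s\<^sup>2"
proof -
  have "exp (s * \<bar>X i\<bar>) \<le> exp (s * X i) + exp (- (s * X i))"
    by (cases "0 \<le> X i") (auto simp: add_increasing add_increasing2)
  also have "\<dots> \<le> (\<Sum>i\<in>A. exp (s * X i) + exp (- (s * X i)))"
    using assms by (intro member_le_sum) (auto intro: add_nonneg_nonneg)
  also have "\<dots> < exp 1 + (\<Sum>i\<in>A. exp (s * X i) + exp (- (s * X i)))"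
    by simp
  finally have "s * \<bar>X i\<bar> \<le> ln (exp 1 + (\<Sum>i\<in>A. exp (s * X i) + exp (- (s * X i))))"
    by (metis exp_gt_zero less_eq_real_def ln_exp ln_less_cancel_iff order_less_trans)
  then have "(s * \<bar>X i\<bar>)\<^sup>2 \<le> (ln (exp 1 + (\<Sum>i\<in>A. exp (s * X i) + exp (- (s * X i)))))\<^sup>2"
    using assms(1) by (intro power_mono) auto
  with assms(1) show ?thesis
    by (simp add: field_simps power_mult_distrib)
qed

lemma dyadic_avg_sum_exp_sign_sum_le:
  assumes "\<And>i. i \<in> A \<Longrightarrow> (\<Sum>k<n. (a k i)\<^sup>2) \<le> s2"
  shows "dyadic_avg n (\<lambda>j. \<Sum>i\<in>A. exp (s * (\<Sum>k<n. dyadic_sign n j k * a k i))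
                                   + exp (- (s * (\<Sum>k<n. dyadic_sign n j k * a k i))))
           \<le> 2 * real (card A) * exp (s\<^sup>2 * s2)"
proof -
  have "dyadic_avg n (\<lambda>j. exp (s * (\<Sum>k<n. dyadic_sign n j k * a k i))
                       + exp (- (s * (\<Sum>k<n. dyadic_sign n j k * a k i)))) \<le> 2 * exp (s\<^sup>2 * s2)"
    if "i \<in> A" for i
    using dyadic_avg_exp_sign_sum_le[OF assms[OF that], of s]
      dyadic_avg_exp_sign_sum_le[OF assms[OF that], of "- s"]
    by (simp add: dyadic_avg_add)
  then have "(\<Sum>i\<in>A. dyadic_avg n (\<lambda>j. exp (s * (\<Sum>k<n. dyadic_sign n j k * a k i))
                       + exp (- (s * (\<Sum>k<n. dyadic_sign n j k * a k i)))))
      \<le> (\<Sum>i\<in>A. 2 * exp (s\<^sup>2 * s2))"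
    by (rule sum_mono)
  then show ?thesis
    by (simp add: dyadic_avg_sum)
qed

lemma ln_square_le_nine_one_plus_ln_square:
  fixes c y :: real
  assumes "1 \<le> c" "exp 1 \<le> y" "y \<le> exp 1 + 2 * c * exp (1 + ln c)"
  shows "(ln y)\<^sup>2 \<le> 9 * (1 + ln c)\<^sup>2"
proof -
  have "1 \<le> c\<^sup>2"
    using assms(1) mult_mono[of 1 c 1 c] by (simp add: power2_eq_square)
  then have "exp 1 * 1 \<le> exp 1 * c\<^sup>2"
    by (intro mult_left_mono) auto
  moreover have "y \<le> exp 1 + 2 * exp 1 * c\<^sup>2"
    using assms(1,3) by (simp add: exp_add power2_eq_square mult_ac)
  ultimately have "y \<le> 3 * exp 1 * c\<^sup>2"
    by linarith
  then have "ln y \<le> ln (3 * exp 1 * c\<^sup>2)"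
    using assms(2) by (intro ln_mono) (auto intro: order_less_le_trans[OF exp_gt_zero])
  also have "\<dots> = ln 3 + 1 + 2 * ln c"
    using assms(1) by (simp add: ln_mult ln_realpow)
  also have "\<dots> \<le> 3 * (1 + ln c)"
    using ln_le_minus_one[of 3] ln_ge_zero[OF assms(1)] by simp
  finally have "ln y \<le> 3 * (1 + ln c)" .
  moreover have "1 \<le> ln y"
    using assms(2) ln_mono[of "exp 1" y] by simp
  ultimately have "(ln y)\<^sup>2 \<le> (3 * (1 + ln c))\<^sup>2"
    by (intro power_mono) auto
  then show ?thesis
    by (simp only: power_mult_distrib) simp
qed

text \<open>Proof: \<open>max\<^sub>i X\<^sub>i\<^sup>2 \<le> (ln W)\<^sup>2 / s\<^sup>2\<close> for \<open>W = e + \<Sum>\<^sub>i (exp (s X\<^sub>i) + exp (-s X\<^sub>i))\<close>;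
  Jensen's inequality for the concave function \<open>(ln y)\<^sup>2\<close> on \<open>[e, \<infinity>)\<close> and the bound
  \<open>E exp (s X\<^sub>i) \<le> exp (s\<^sup>2 s2)\<close> control \<open>E (ln W)\<^sup>2\<close>, and \<open>s\<^sup>2 s2 = 1 + ln |A|\<close> balances the two.\<close>

lemma dyadic_avg_Max_sign_sum_square_le_pos:
  fixes a :: "nat \<Rightarrow> 'i \<Rightarrow> real"
  assumes A: "finite A" "A \<noteq> {}" and "0 < s2"
    and bound: "\<And>i. i \<in> A \<Longrightarrow> (\<Sum>k<n. (a k i)\<^sup>2) \<le> s2"
  shows "dyadic_avg n (\<lambda>j. Max ((\<lambda>i. (\<Sum>k<n. dyadic_sign n j k * a k i)\<^sup>2) ` A))
           \<le> 9 * (1 + ln (card A)) * s2"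
proof -
  define X where "X i j = (\<Sum>k<n. dyadic_sign n j k * a k i)" for i j
  define L where "L = ln (card A)"
  have "1 \<le> real (card A)"
    using A by (simp add: Suc_le_eq card_gt_0_iff)
  then have "0 \<le> L"
    by (simp add: L_def)
  define s where "s = sqrt ((1 + L) / s2)"
  have "0 < s" and s_sq: "s\<^sup>2 = (1 + L) / s2"
    using \<open>0 < s2\<close> \<open>0 \<le> L\<close> by (simp_all add: s_def)
  define W where "W j = exp 1 + (\<Sum>i\<in>A. exp (s * X i j) + exp (- (s * X i j)))" for j
  have W_ge: "exp 1 \<le> W j" for j
    unfolding W_def by (intro add_increasing2 sum_nonneg) auto
  have "dyadic_avg n W = exp 1 + dyadic_avg n (\<lambda>j. \<Sum>i\<in>A. exp (s * X i j) + exp (- (s * X i j)))"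
    unfolding W_def by (simp add: dyadic_avg_add)
  also have "\<dots> \<le> exp 1 + 2 * real (card A) * exp (1 + L)"
    using dyadic_avg_sum_exp_sign_sum_le[where A = A and a = a and s = s, OF bound] s_sq \<open>0 < s2\<close>
    by (simp add: X_def)
  finally have "dyadic_avg n W \<le> exp 1 + 2 * real (card A) * exp (1 + L)" .
  moreover have "exp 1 \<le> dyadic_avg n W"
    using W_ge dyadic_avg_mono[of n "\<lambda>_. exp 1" W] by simp
  ultimately have ln_avg: "(ln (dyadic_avg n W))\<^sup>2 \<le> 9 * (1 + L)\<^sup>2"
    using \<open>1 \<le> real (card A)\<close> unfolding L_def by (intro ln_square_le_nine_one_plus_ln_square)
  have "dyadic_avg n (\<lambda>j. Max ((\<lambda>i. (X i j)\<^sup>2) ` A)) \<le> dyadic_avg n (\<lambda>j. (ln (W j))\<^sup>2 / s\<^sup>2)"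
    using A \<open>0 < s\<close>
    by (intro dyadic_avg_mono) (auto simp: W_def Max_le_iff intro: square_le_ln_sum_exp_square)
  also have "\<dots> = dyadic_avg n (\<lambda>j. (ln (W j))\<^sup>2) / s\<^sup>2"
    by (rule dyadic_avg_divide)
  also have "\<dots> \<le> 9 * (1 + L)\<^sup>2 / s\<^sup>2"
    using dyadic_avg_ln_square_le[of n W] W_ge ln_avg by (intro divide_right_mono) auto
  also have "\<dots> = 9 * (1 + L) * s2"
    unfolding s_sq using \<open>0 \<le> L\<close> \<open>0 < s2\<close> by (simp add: field_simps power2_eq_square)
  finally show ?thesis
    by (simp add: X_def L_def)
qed

lemma dyadic_avg_Max_sign_sum_square_le:
  fixes a :: "nat \<Rightarrow> 'i \<Rightarrow> real"
  assumes A: "finite A" "A \<noteq> {}" and bound: "\<And>i. i \<in> A \<Longrightarrow> (\<Sum>k<n. (a k i)\<^sup>2) \<le> s2"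
  shows "dyadic_avg n (\<lambda>j. Max ((\<lambda>i. (\<Sum>k<n. dyadic_sign n j k * a k i)\<^sup>2) ` A))
           \<le> 9 * (1 + ln (card A)) * s2"
proof (cases "s2 = 0")
  case True
  have "a k i = 0" if "i \<in> A" "k < n" for i k
  proof -
    have "(\<Sum>k<n. (a k i)\<^sup>2) = 0"
      using bound[OF that(1)] True by (simp add: order_antisym sum_nonneg)
    with that(2) show ?thesis
      by (simp add: sum_nonneg_eq_0_iff)
  qed
  then have "(\<lambda>i. (\<Sum>k<n. dyadic_sign n j k * a k i)\<^sup>2) ` A = {0}" for j
    using A(2) by auto
  then show ?thesis
    using True by simp
next
  case False
  obtain i where "i \<in> A"
    using A by blast
  then have "0 \<le> s2"
    using bound[of i] sum_nonneg[of "{..<n}" "\<lambda>k. (a k i)\<^sup>2"] by simp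
  with False show ?thesis
    using dyadic_avg_Max_sign_sum_square_le_pos[OF A _ bound] by simp
qed

lemma linf_norm_nonneg: "0 \<le> linf_norm N v"
  unfolding linf_norm_def by (rule Max_ge_iff[THEN iffD2]) auto

lemma norm_le_linf_norm: "i < N \<Longrightarrow> cmod (v i) \<le> linf_norm N v"
  unfolding linf_norm_def by (rule Max_ge) auto

lemma linf_norm_le: "0 \<le> B \<Longrightarrow> (\<And>i. i < N \<Longrightarrow> cmod (v i) \<le> B) \<Longrightarrow> linf_norm N v \<le> B"
  unfolding linf_norm_def by (subst Max_le_iff) auto

lemma linf_norm_square_le:
  assumes "0 \<le> B" "\<And>i. i < N \<Longrightarrow> (cmod (v i))\<^sup>2 \<le> B"
  shows "(linf_norm N v)\<^sup>2 \<le> B"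
proof -
  have "linf_norm N v \<le> sqrt B"
    using assms by (intro linf_norm_le) (auto intro: real_le_rsqrt)
  then show ?thesis
    using assms(1) linf_norm_nonneg[of N v] by (metis power_mono real_sqrt_pow2)
qed

lemma dyadic_avg_linf_norm_sign_sum_square_le:
  fixes y :: "nat \<Rightarrow> nat \<Rightarrow> complex"
  assumes "0 \<le> s2" and bound: "\<And>i. i < N \<Longrightarrow> (\<Sum>k<n. (cmod (y k i))\<^sup>2) \<le> s2"
  shows "dyadic_avg n (\<lambda>j. (linf_norm N (\<lambda>i. \<Sum>k<n. dyadic_sign n j k *\<^sub>R y k i))\<^sup>2)
           \<le> 18 * (1 + ln (real N)) * s2"
proof (cases "N = 0")
  case True
  then show ?thesis
    using assms(1) by (simp add: linf_norm_def)
next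
  case False
  define M where "M f j = Max ((\<lambda>i. (\<Sum>k<n. dyadic_sign n j k * f (y k i))\<^sup>2) ` {..<N})"
    for f :: "complex \<Rightarrow> real" and j
  have M_le: "dyadic_avg n (M f) \<le> 9 * (1 + ln (card {..<N})) * s2"
    if "\<And>z. (f z)\<^sup>2 \<le> (cmod z)\<^sup>2" for f
    unfolding M_def
  proof (rule dyadic_avg_Max_sign_sum_square_le[OF finite_lessThan])
    show "{..<N} \<noteq> {}"
      using False by (simp add: lessThan_empty_iff)
    fix i
    assume "i \<in> {..<N}"
    then have "i < N" by simp
    have "(\<Sum>k<n. (f (y k i))\<^sup>2) \<le> (\<Sum>k<n. (cmod (y k i))\<^sup>2)"
      by (intro sum_mono that)
    also have "\<dots> \<le> s2"
      using bound[OF \<open>i < N\<close>] .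
    finally show "(\<Sum>k<n. (f (y k i))\<^sup>2) \<le> s2" .
  qed
  have "(linf_norm N (\<lambda>i. \<Sum>k<n. dyadic_sign n j k *\<^sub>R y k i))\<^sup>2 \<le> M Re j + M Im j" for j
  proof (rule linf_norm_square_le)
    have "(\<Sum>k<n. dyadic_sign n j k * f (y k i))\<^sup>2 \<le> M f j" if "i < N" for f i
      unfolding M_def using that by (intro Max_ge) auto
    then show "(cmod (\<Sum>k<n. dyadic_sign n j k *\<^sub>R y k i))\<^sup>2 \<le> M Re j + M Im j" if "i < N" for i
      using that by (simp add: cmod_power2 Re_sum Im_sum add_mono)
    from this[of 0] False show "0 \<le> M Re j + M Im j"
      by (meson order_trans zero_le_power2 not_gr_zero)
  qed
  then have "dyadic_avg n (\<lambda>j. (linf_norm N (\<lambda>i. \<Sum>k<n. dyadic_sign n j k *\<^sub>R y k i))\<^sup>2)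
      \<le> dyadic_avg n (M Re) + dyadic_avg n (M Im)"
    by (simp add: dyadic_avg_mono flip: dyadic_avg_add)
  also have "\<dots> \<le> 18 * (1 + ln (real N)) * s2"
    using M_le[of Re] M_le[of Im] by (simp add: cmod_power2 algebra_simps)
  finally show ?thesis .
qed

section \<open>Weak \<open>\<ell>\<^sub>2\<close> norms, embeddings into \<open>\<ell>\<^sub>\<infinity>\<^sup>N\<close> and the 2-summing norm\<close>

lemma bounded_linear_if_bounded_clin_fun: "bounded_clin_fun \<phi> \<Longrightarrow> bounded_linear \<phi>"
  unfolding bounded_clin_fun_def
proof (elim conjE exE, intro bounded_linear_intro)
  fix K r x
  assume "\<forall>c x. \<phi> (cscale c x) = c * \<phi> x" "\<forall>x. cmod (\<phi> x) \<le> K * norm x"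
  then show "\<phi> (r *\<^sub>R x) = r *\<^sub>R \<phi> x" "norm (\<phi> x) \<le> norm x * K"
    by (metis cscale_of_real scaleR_conv_of_real, simp add: mult.commute)
qed simp

lemma bounded_linear_if_bounded_clin_op: "bounded_clin_op T \<Longrightarrow> bounded_linear T"
  unfolding bounded_clin_op_def
proof (elim conjE exE, intro bounded_linear_intro)
  fix K r x
  assume "\<forall>c x. T (cscale c x) = cscale c (T x)" "\<forall>x. norm (T x) \<le> K * norm x"
  then show "T (r *\<^sub>R x) = r *\<^sub>R T x" "norm (T x) \<le> norm x * K"
    by (metis cscale_of_real, simp add: mult.commute)
qed simp

lemma norm_le_if_dual_ball:
  assumes "\<psi> \<in> dual_ball"
  shows "cmod (\<psi> v) \<le> norm v"
proof -
  have "bounded_linear \<psi>" "onorm \<psi> \<le> 1"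
    using assms bounded_linear_if_bounded_clin_fun unfolding dual_ball_def by auto
  then have "cmod (\<psi> v) \<le> 1 * norm v"
    using onorm by (metis mult_right_mono norm_ge_zero order_trans)
  then show ?thesis
    by simp
qed

lemma sqrt_sum_square_le_weak_l2:
  assumes "\<psi> \<in> dual_ball"
  shows "sqrt (\<Sum>k<n. (cmod (\<psi> (x k)))\<^sup>2) \<le> weak_l2 n x"
  unfolding weak_l2_def
proof (rule cSUP_upper[OF assms], rule bdd_aboveI2)
  fix \<phi> :: "'a \<Rightarrow> complex"
  assume "\<phi> \<in> dual_ball"
  then show "sqrt (\<Sum>k<n. (cmod (\<phi> (x k)))\<^sup>2) \<le> sqrt (\<Sum>k<n. (norm (x k))\<^sup>2)"
    by (intro real_sqrt_le_mono sum_mono power_mono norm_le_if_dual_ball) auto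
qed

lemma zero_in_dual_ball: "(\<lambda>_. 0) \<in> dual_ball"
  unfolding dual_ball_def bounded_clin_fun_def by (auto simp: onorm_zero intro: exI[of _ 0])

lemma weak_l2_nonneg: "0 \<le> weak_l2 n x"
  using sqrt_sum_square_le_weak_l2[OF zero_in_dual_ball, of n x] by simp

lemma sum_square_le_onorm_weak_l2:
  assumes "bounded_clin_fun \<phi>"
  shows "(\<Sum>k<n. (cmod (\<phi> (x k)))\<^sup>2) \<le> (onorm \<phi>)\<^sup>2 * (weak_l2 n x)\<^sup>2"
proof -
  have bl: "bounded_linear \<phi>"
    using assms by (rule bounded_linear_if_bounded_clin_fun)
  show ?thesis
  proof (cases "onorm \<phi> = 0")
    case True
    then show ?thesis
      using onorm[OF bl] by simp
  next
    case False
    then have pos: "0 < onorm \<phi>"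
      using onorm_pos_le[OF bl] by simp
    define \<psi> where "\<psi> v = \<phi> v / complex_of_real (onorm \<phi>)" for v
    have \<psi>_le: "cmod (\<psi> v) \<le> 1 * norm v" for v
      using onorm[OF bl, of v] pos by (simp add: \<psi>_def norm_divide field_simps)
    have "\<psi> \<in> dual_ball"
      using assms unfolding dual_ball_def bounded_clin_fun_def
    proof (intro CollectI conjI allI exI; elim conjE)
      show "\<psi> (v + w) = \<psi> v + \<psi> w" if "\<forall>v w. \<phi> (v + w) = \<phi> v + \<phi> w" for v w
        using that by (simp add: \<psi>_def add_divide_distrib)
      show "\<psi> (cscale c v) = c * \<psi> v" if "\<forall>c v. \<phi> (cscale c v) = c * \<phi> v" for c v
        using that by (simp add: \<psi>_def)
      show "cmod (\<psi> v) \<le> 1 * norm v" for v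
        by (rule \<psi>_le)
      show "onorm \<psi> \<le> 1"
        using \<psi>_le by (intro onorm_bound) auto
    qed
    then have "(sqrt (\<Sum>k<n. (cmod (\<psi> (x k)))\<^sup>2))\<^sup>2 \<le> (weak_l2 n x)\<^sup>2"
      by (intro power_mono sqrt_sum_square_le_weak_l2) (simp_all add: sum_nonneg)
    moreover have "(\<Sum>k<n. (cmod (\<psi> (x k)))\<^sup>2) = (\<Sum>k<n. (cmod (\<phi> (x k)))\<^sup>2) / (onorm \<phi>)\<^sup>2"
      using pos by (simp add: \<psi>_def norm_divide power_divide sum_divide_distrib)
    ultimately show ?thesis
      using pos by (simp add: sum_nonneg divide_le_eq mult.commute)
  qed
qed

lemma lambda_embedding_bounds:
  assumes "lambda_embedding N lam I"
  obtains a b where "0 \<le> a" "0 \<le> b" "a * b \<le> lam"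
    "\<And>x. linf_norm N (I x) \<le> a * norm x" "\<And>x. norm x \<le> b * linf_norm N (I x)"
proof
  have add: "\<And>x y. I (x + y) = (\<lambda>i. I x i + I y i)" and supp: "\<And>x i. N \<le> i \<Longrightarrow> I x i = 0"
    and "inj I" and bdd_I: "bdd_above (range (\<lambda>x. linf_norm N (I x) / norm x))"
    and bdd_inv: "bdd_above (range (\<lambda>x. norm x / linf_norm N (I x)))"
    using assms unfolding lambda_embedding_def by auto
  define a where "a = (SUP x. linf_norm N (I x) / norm x)"
  define b where "b = (SUP x. norm x / linf_norm N (I x))"
  show "a * b \<le> lam"
    using assms unfolding lambda_embedding_def a_def b_def by simp
  show "0 \<le> a" "0 \<le> b"
    using cSUP_upper[OF UNIV_I bdd_I, of 0] cSUP_upper[OF UNIV_I bdd_inv, of 0]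
    by (simp_all add: a_def b_def)
  have I_0: "I 0 = (\<lambda>i. 0)"
    using add[of 0 0] by (simp add: fun_eq_iff)
  show "linf_norm N (I x) \<le> a * norm x" for x
  proof (cases "x = 0")
    case True
    then show ?thesis
      by (simp add: I_0 linf_norm_def)
  next
    case False
    then show ?thesis
      using cSUP_upper[OF UNIV_I bdd_I, of x] by (simp add: a_def pos_divide_le_eq mult.commute)
  qed
  show "norm x \<le> b * linf_norm N (I x)" for x
  proof (cases "x = 0")
    case True
    then show ?thesis
      using \<open>0 \<le> b\<close> by (simp add: linf_norm_nonneg)
  next
    case False
    then obtain i where "I x i \<noteq> 0"
      using \<open>inj I\<close> I_0 by (metis injD ext)
    then have "0 < linf_norm N (I x)"
      using supp[of i x] norm_le_linf_norm[of i N "I x"] by (meson not_le order_less_le_trans zero_less_norm_iff)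
    then show ?thesis
      using cSUP_upper[OF UNIV_I bdd_inv, of x] by (simp add: b_def pos_divide_le_eq mult.commute)
  qed
qed

lemma lambda_embedding_coordinate:
  assumes "lambda_embedding N lam I" "0 \<le> a" and bound: "\<And>x. linf_norm N (I x) \<le> a * norm x"
  shows "bounded_clin_fun (\<lambda>x. I x i)" and "onorm (\<lambda>x. I x i) \<le> a"
proof -
  have "cmod (I x i) \<le> a * norm x" for x
  proof (cases "i < N")
    case True
    then show ?thesis
      using norm_le_linf_norm[OF True, of "I x"] bound[of x] by linarith
  next
    case False
    then show ?thesis
      using assms(1,2) by (simp add: lambda_embedding_def)
  qed
  then show "bounded_clin_fun (\<lambda>x. I x i)" "onorm (\<lambda>x. I x i) \<le> a"
    using assms(1,2) by (auto simp: lambda_embedding_def bounded_clin_fun_def intro: onorm_bound)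
qed

lemma sqrt_18_le_exp_2: "sqrt 18 \<le> exp (2::real)"
proof -
  have "125 / 27 = (1 + 2 / 3 :: real) ^ 3"
    by (simp add: power_divide)
  also have "\<dots> \<le> exp (2 / 3) ^ 3"
    using exp_ge_add_one_self[of "2 / 3"] by (intro power_mono) auto
  also have "\<dots> = exp 2"
    by (simp flip: exp_of_nat_mult)
  finally have "(125 / 27)\<^sup>2 \<le> (exp (2::real))\<^sup>2"
    by (intro power_mono) auto
  then show ?thesis
    by (intro real_le_lsqrt) (auto simp: power2_eq_square)
qed

lemma dyadic_avg_linf_norm_embedding_sign_sum_le:
  assumes emb: "lambda_embedding N lam I" and "0 \<le> a"
    and I_le: "\<And>x. linf_norm N (I x) \<le> a * norm x"
  shows "dyadic_avg n (\<lambda>j. (linf_norm N (I (\<Sum>k<n. dyadic_sign n j k *\<^sub>R x k)))\<^sup>2)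
           \<le> 18 * (1 + ln (real N)) * (a\<^sup>2 * (weak_l2 n x)\<^sup>2)"
proof -
  have coord: "bounded_clin_fun (\<lambda>x. I x i)" "onorm (\<lambda>x. I x i) \<le> a" for i
    using lambda_embedding_coordinate[OF emb \<open>0 \<le> a\<close> I_le] by auto
  have I_sum: "I (\<Sum>k<n. dyadic_sign n j k *\<^sub>R x k) = (\<lambda>i. \<Sum>k<n. dyadic_sign n j k *\<^sub>R I (x k) i)"
    for j
  proof
    fix i
    interpret I_i: bounded_linear "\<lambda>x. I x i"
      using coord(1) by (rule bounded_linear_if_bounded_clin_fun)
    show "I (\<Sum>k<n. dyadic_sign n j k *\<^sub>R x k) i = (\<Sum>k<n. dyadic_sign n j k *\<^sub>R I (x k) i)"
      by (simp add: I_i.sum I_i.scale)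
  qed
  have "(\<Sum>k<n. (cmod (I (x k) i))\<^sup>2) \<le> a\<^sup>2 * (weak_l2 n x)\<^sup>2" for i
  proof -
    have "0 \<le> onorm (\<lambda>x. I x i)"
      using coord(1) by (intro onorm_pos_le bounded_linear_if_bounded_clin_fun)
    then have "(onorm (\<lambda>x. I x i))\<^sup>2 * (weak_l2 n x)\<^sup>2 \<le> a\<^sup>2 * (weak_l2 n x)\<^sup>2"
      using coord(2) by (intro mult_right_mono power_mono) auto
    with sum_square_le_onorm_weak_l2[OF coord(1)] show ?thesis
      by (rule order_trans)
  qed
  then show ?thesis
    unfolding I_sum by (intro dyadic_avg_linf_norm_sign_sum_square_le) auto
qed

lemma sqrt_sum_square_le_dyadic_avg_if_cotype:
  fixes y :: "nat \<Rightarrow> 'a::real_normed_vector"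
  assumes cotype: "\<And>n (z :: nat \<Rightarrow> 'a). sqrt (\<Sum>k<n. (norm (z k))\<^sup>2)
      \<le> c * sqrt (integral {0..1} (\<lambda>t. (norm (\<Sum>k<n. rademacher (Suc k) t *\<^sub>R z k))\<^sup>2))"
  shows "sqrt (\<Sum>k<n. (norm (y k))\<^sup>2)
           \<le> c * sqrt (dyadic_avg n (\<lambda>j. (norm (\<Sum>k<n. dyadic_sign n j k *\<^sub>R y k))\<^sup>2))"
  using cotype[where n = n and z = y]
    has_integral_rademacher_sum[where f = "\<lambda>z. (norm z)\<^sup>2" and y = y and n = n]
  by (simp add: integral_unique)

lemma sqrt_sum_square_le_weak_l2_if_embedding:
  fixes I :: "'x::cbanach \<Rightarrow> nat \<Rightarrow> complex" and T :: "'x \<Rightarrow> 'f::cbanach"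
  assumes emb: "lambda_embedding N lam I" and T: "bounded_clin_op T" and "0 \<le> c"
    and cotype: "\<And>n (y :: nat \<Rightarrow> 'f). sqrt (\<Sum>k<n. (norm (y k))\<^sup>2)
      \<le> c * sqrt (integral {0..1} (\<lambda>t. (norm (\<Sum>k<n. rademacher (Suc k) t *\<^sub>R y k))\<^sup>2))"
  shows "sqrt (\<Sum>k<n. (norm (T (x k)))\<^sup>2)
           \<le> exp 2 * lam * sqrt (1 + ln (real N)) * c * onorm T * weak_l2 n x"
proof -
  obtain a b where "0 \<le> a" "0 \<le> b" "a * b \<le> lam" and I_le: "\<And>x. linf_norm N (I x) \<le> a * norm x"
    and le_I: "\<And>x. norm x \<le> b * linf_norm N (I x)"
    using lambda_embedding_bounds[OF emb] by blast
  interpret T: bounded_linear T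
    using T by (rule bounded_linear_if_bounded_clin_op)
  define B where "B = onorm T"
  have "0 \<le> B"
    unfolding B_def by (rule onorm_pos_le[OF T.bounded_linear_axioms])
  define L where "L = ln (real N)"
  have "0 \<le> L"
    by (cases N) (simp_all add: L_def)
  define w where "w = weak_l2 n x"
  define v where "v j = (\<Sum>k<n. dyadic_sign n j k *\<^sub>R x k)" for j
  have "(norm (T (v j)))\<^sup>2 \<le> (B * b)\<^sup>2 * (linf_norm N (I (v j)))\<^sup>2" for j
  proof -
    have "norm (T (v j)) \<le> B * norm (v j)"
      unfolding B_def by (rule onorm[OF T.bounded_linear_axioms])
    also have "\<dots> \<le> B * (b * linf_norm N (I (v j)))"
      using le_I \<open>0 \<le> B\<close> by (rule mult_left_mono)
    finally show ?thesis
      by (simp add: power_mult_distrib[symmetric] mult.assoc power_mono)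
  qed
  then have "dyadic_avg n (\<lambda>j. (norm (T (v j)))\<^sup>2) \<le> dyadic_avg n (\<lambda>j. (B * b)\<^sup>2 * (linf_norm N (I (v j)))\<^sup>2)"
    by (rule dyadic_avg_mono)
  also have "\<dots> \<le> (B * b)\<^sup>2 * (18 * (1 + L) * (a\<^sup>2 * w\<^sup>2))"
    unfolding dyadic_avg_mult_left v_def L_def w_def
    using dyadic_avg_linf_norm_embedding_sign_sum_le[OF emb \<open>0 \<le> a\<close> I_le] by (rule mult_left_mono) simp
  also have "\<dots> = (sqrt 18 * (a * b) * sqrt (1 + L) * B * w)\<^sup>2"
    using \<open>0 \<le> L\<close> by (simp add: power_mult_distrib)
  finally have "sqrt (dyadic_avg n (\<lambda>j. (norm (T (v j)))\<^sup>2)) \<le> \<bar>sqrt 18 * (a * b) * sqrt (1 + L) * B * w\<bar>"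
    by (metis real_sqrt_abs real_sqrt_le_mono)
  also have "\<dots> = sqrt 18 * (a * b) * sqrt (1 + L) * B * w"
    using \<open>0 \<le> a\<close> \<open>0 \<le> b\<close> \<open>0 \<le> B\<close> weak_l2_nonneg[of n x] \<open>0 \<le> L\<close>
    by (simp add: w_def)
  also have "\<dots> \<le> exp 2 * lam * sqrt (1 + L) * B * w"
    using sqrt_18_le_exp_2 \<open>a * b \<le> lam\<close> \<open>0 \<le> a\<close> \<open>0 \<le> b\<close> \<open>0 \<le> B\<close> weak_l2_nonneg[of n x] \<open>0 \<le> L\<close>
    unfolding w_def by (intro mult_right_mono mult_mono) auto
  finally have "c * sqrt (dyadic_avg n (\<lambda>j. (norm (T (v j)))\<^sup>2)) \<le> c * (exp 2 * lam * sqrt (1 + L) * B * w)"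
    using \<open>0 \<le> c\<close> by (rule mult_left_mono)
  moreover have "sqrt (\<Sum>k<n. (norm (T (x k)))\<^sup>2) \<le> c * sqrt (dyadic_avg n (\<lambda>j. (norm (T (v j)))\<^sup>2))"
    using sqrt_sum_square_le_dyadic_avg_if_cotype[where n = n and y = "\<lambda>k. T (x k)", OF cotype]
    by (simp add: v_def T.sum T.scale)
  ultimately show ?thesis
    unfolding B_def L_def w_def by (simp add: mult_ac)
qed

lemma pi2_le_ereal:
  assumes "0 \<le> C" "\<And>n x. sqrt (\<Sum>k<n. (norm (T (x k)))\<^sup>2) \<le> C * weak_l2 n x"
  shows "pi2 T \<le> ereal C"
  unfolding pi2_def using assms by (intro Inf_lower) simp

lemma le_mult_cotype2_const:
  fixes P :: ereal
  assumes "0 < K"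
    and le: "\<And>c. 0 \<le> c \<Longrightarrow> (\<And>n (y :: nat \<Rightarrow> 'f). sqrt (\<Sum>k<n. (norm (y k))\<^sup>2)
      \<le> c * sqrt (integral {0..1} (\<lambda>t. (norm (\<Sum>k<n. rademacher (Suc k) t *\<^sub>R y k))\<^sup>2)))
      \<Longrightarrow> P \<le> ereal (K * c)"
  shows "P \<le> ereal K * cotype2_const TYPE('f::cbanach)"
proof -
  define Cs where "Cs = {C. 0 \<le> C \<and> (\<forall>n (y::nat \<Rightarrow> 'f).
       ereal (sqrt (\<Sum>k<n. (norm (y k))\<^sup>2)) \<le>
       C * ereal (sqrt (integral {0..1} (\<lambda>t. (norm (\<Sum>k<n. rademacher (Suc k) t *\<^sub>R y k))\<^sup>2))))}"
  have "P \<le> ereal K * C" if "C \<in> Cs" for C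
  proof (cases C)
    case (real c)
    with that le[of c] show ?thesis
      by (simp add: Cs_def)
  qed (use that \<open>0 < K\<close> in \<open>simp_all add: Cs_def\<close>)
  then have "P \<le> Inf {ereal K * C | C. C \<in> Cs}"
    by (auto intro!: Inf_greatest)
  also have "\<dots> = ereal K * cotype2_const TYPE('f)"
    unfolding ereal_Inf_cmult[OF \<open>0 < K\<close>] cotype2_const_def Cs_def by simp
  finally show ?thesis .
qed

theorem proposition4p3:
  fixes N :: nat and lam :: real
    and I :: "'x::cbanach \<Rightarrow> nat \<Rightarrow> complex" and T :: "'x \<Rightarrow> 'f::cbanach"
  assumes "1 \<le> lam"
    and "lambda_embedding N lam I"
    and "bounded_clin_op T"
  shows "pi2 T \<le> ereal (exp 2 * lam * sqrt (1 + ln (real N))) * cotype2_const TYPE('f) * ereal (onorm T)"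
proof -
  define A where "A = exp 2 * lam * sqrt (1 + ln (real N))"
  have "0 \<le> ln (real N)"
    by (cases N) simp_all
  then have "0 < A"
    using assms(1) by (simp add: A_def)
  have bl: "bounded_linear T"
    using assms(3) by (rule bounded_linear_if_bounded_clin_op)
  have estimate: "sqrt (\<Sum>k<n. (norm (T (x k)))\<^sup>2) \<le> A * c * onorm T * weak_l2 n x"
    if "0 \<le> c" "\<And>n (y :: nat \<Rightarrow> 'f). sqrt (\<Sum>k<n. (norm (y k))\<^sup>2)
      \<le> c * sqrt (integral {0..1} (\<lambda>t. (norm (\<Sum>k<n. rademacher (Suc k) t *\<^sub>R y k))\<^sup>2))" for c n x
    unfolding A_def by (rule sqrt_sum_square_le_weak_l2_if_embedding[OF assms(2,3) that])
  show ?thesis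
  proof (cases "onorm T = 0")
    case True
    then have "T v = 0" for v
      using onorm[OF bl, of v] by simp
    then have "pi2 T \<le> ereal 0"
      by (intro pi2_le_ereal) auto
    then show ?thesis
      using True by (simp flip: zero_ereal_def)
  next
    case False
    then have "pi2 T \<le> ereal (A * onorm T) * cotype2_const TYPE('f)"
      using \<open>0 < A\<close> onorm_pos_le[OF bl] estimate
      by (intro le_mult_cotype2_const pi2_le_ereal) (auto simp: mult_ac)
    then show ?thesis
      by (simp add: A_def mult_ac)
  qed
qed

end
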